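(* Let $\langle M,\mathsf{S}\rangle$ be a sum structure with $M\neq\emptyset$. Then the relation $\sqsubseteq_{\mathsf{S}}$ satisfies the parthood axioms (P1)–(P5), i.e. $\langle M,\sqsubseteq_{\mathsf{S}}\rangle$ is a mereological structure.
   Context: For a set $M$ and a relation $\mathsf{S}\subseteq M\times\mathcal{P}(M)$ define: $x\sqsubseteq_{\mathsf{S}} y$ iff there is $X\subseteq M$ with $y\,\mathsf{S}\,X$ and $x\in X$; $\mathrm{I}(x)=\{y\in M\mid y\sqsubseteq_{\mathsf{S}} x\}$ and for $A\subseteq M$, $\mathrm{I}(A)=\bigcup_{a\in A}\mathrm{I}(a)$; $x$ s-overlaps $y$ iff there are $X,Y\subseteq M$ with $x\,\mathsf{S}\,X$, $y\,\mathsf{S}\,Y$, $X\cap Y\neq\emptyset$; a set $A\subseteq M$ is pre-dense in $B\subseteq M$ iff for every $b\in B$ there is $a\in A$ such that $a$ s-overlaps $b$. A sum structure is a pair $\langle M,\mathsf{S}\rangle$ satisfying: (S1) for every non-empty $X\subseteq M$ there is $x\in M$ with $x\,\mathsf{S}\,X$; (S2) $x\,\mathsf{S}\,X\wedge y\,\mathsf{S}\,X\to x=y$; (S3) $x\,\mathsf{S}\,X\wedge y\,\mathsf{S}\,Y\wedge x\in Y\to y\,\mathsf{S}\,(X\cup Y)$; (S4) if $x\,\mathsf{S}\,X$, $x\,\mathsf{S}\,Y$ and $y\in Y$, then there are $z\in X$ and $Z,U\subseteq M$ with $z\,\mathsf{S}\,Z$, $y\,\mathsf{S}\,U$ and $Z\cap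 U\neq\emptyset$; (S5) for all $x\in M$ and $X\subseteq M$: if $X$ is pre-dense in $\mathrm{I}(x)$ then $x\,\mathsf{S}\,(\mathrm{I}(x)\cap\mathrm{I}(X))$. A mereological structure is a pair $\langle M,\sqsubseteq\rangle$ where $M$ is a non-empty set and $\sqsubseteq\subseteq M\times M$ satisfies, for all $x,y,z\in M$: (P1) $x\sqsubseteq x$; (P2) $x\sqsubseteq y\wedge y\sqsubseteq x\to x=y$; (P3) $x\sqsubseteq y\wedge y\sqsubseteq z\to x\sqsubseteq z$; (P4) if $x\not\sqsubseteq y$ then there is $z\in M$ with $z\sqsubseteq x$ such that there is no $u\in M$ with $u\sqsubseteq z$ and $u\sqsubseteq y$; (P5) for every non-empty $X\subseteq M$ there is $x\in M$ such that every $y\in X$ satisfies $y\sqsubseteq x$, and for every $a\in M$ with $a\sqsubseteq x$ there exist $y\in X$ and $z\in M$ with $z\sqsubseteq y$ and $z\sqsubseteq a$. *)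

theory Defs
  imports Main
begin

definition sum_rel :: "'a set \<Rightarrow> ('a \<Rightarrow> 'a set \<Rightarrow> bool) \<Rightarrow> bool" where
  "sum_rel M S \<longleftrightarrow> (\<forall>x X. S x X \<longrightarrow> x \<in> M \<and> X \<subseteq> M)"

definition sqleS :: "'a set \<Rightarrow> ('a \<Rightarrow> 'a set \<Rightarrow> bool) \<Rightarrow> 'a \<Rightarrow> 'a \<Rightarrow> bool" where
  "sqleS M S x y \<longleftrightarrow> (\<exists>X. X \<subseteq> M \<and> S y X \<and> x \<in> X)"

definition I_el :: "'a set \<Rightarrow> ('a \<Rightarrow> 'a set \<Rightarrow> bool) \<Rightarrow> 'a \<Rightarrow> 'a set" where
  "I_el M S x = {y \<in> M. sqleS M S y x}"

definition I_set :: "'a set \<Rightarrow> ('a \<Rightarrow> 'a set \<Rightarrow> bool) \<Rightarrow> 'a set \<Rightarrow> 'a set" where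
  "I_set M S A = (\<Union>a\<in>A. I_el M S a)"

definition s_overlaps :: "'a set \<Rightarrow> ('a \<Rightarrow> 'a set \<Rightarrow> bool) \<Rightarrow> 'a \<Rightarrow> 'a \<Rightarrow> bool" where
  "s_overlaps M S x y \<longleftrightarrow>
     (\<exists>X Y. X \<subseteq> M \<and> Y \<subseteq> M \<and> S x X \<and> S y Y \<and> X \<inter> Y \<noteq> {})"

definition pre_dense :: "'a set \<Rightarrow> ('a \<Rightarrow> 'a set \<Rightarrow> bool) \<Rightarrow> 'a set \<Rightarrow> 'a set \<Rightarrow> bool" where
  "pre_dense M S A B \<longleftrightarrow> (\<forall>b\<in>B. \<exists>a\<in>A. s_overlaps M S a b)"

definition sum_structure :: "'a set \<Rightarrow> ('a \<Rightarrow> 'a set \<Rightarrow> bool) \<Rightarrow> bool" where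
  "sum_structure M S \<longleftrightarrow>
     sum_rel M S \<and>
     (\<forall>X. X \<subseteq> M \<and> X \<noteq> {} \<longrightarrow> (\<exists>x\<in>M. S x X)) \<and>
     (\<forall>x\<in>M. \<forall>y\<in>M. \<forall>X. X \<subseteq> M \<longrightarrow> S x X \<and> S y X \<longrightarrow> x = y) \<and>
     (\<forall>x\<in>M. \<forall>y\<in>M. \<forall>X Y. X \<subseteq> M \<and> Y \<subseteq> M \<longrightarrow>
        S x X \<and> S y Y \<and> x \<in> Y \<longrightarrow> S y (X \<union> Y)) \<and>
     (\<forall>x\<in>M. \<forall>y\<in>M. \<forall>X Y. X \<subseteq> M \<and> Y \<subseteq> M \<longrightarrow>
        S x X \<and> S x Y \<and> y \<in> Y \<longrightarrow>
        (\<exists>z\<in>X. \<exists>Z U. Z \<subseteq> M \<and> U \<subseteq> M \<and> S z Z \<and> S y U \<and> Z \<inter> U \<noteq> {})) \<and>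
     (\<forall>x\<in>M. \<forall>X. X \<subseteq> M \<longrightarrow>
        pre_dense M S X (I_el M S x) \<longrightarrow> S x (I_el M S x \<inter> I_set M S X))"

definition mereological_structure :: "'a set \<Rightarrow> ('a \<Rightarrow> 'a \<Rightarrow> bool) \<Rightarrow> bool" where
  "mereological_structure M P \<longleftrightarrow>
     M \<noteq> {} \<and>
     (\<forall>x\<in>M. P x x) \<and>
     (\<forall>x\<in>M. \<forall>y\<in>M. P x y \<and> P y x \<longrightarrow> x = y) \<and>
     (\<forall>x\<in>M. \<forall>y\<in>M. \<forall>z\<in>M. P x y \<and> P y z \<longrightarrow> P x z) \<and>
     (\<forall>x\<in>M. \<forall>y\<in>M. \<not> P x y \<longrightarrow>
        (\<exists>z\<in>M. P z x \<and> \<not> (\<exists>u\<in>M. P u z \<and> P u y))) \<and>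
     (\<forall>X. X \<subseteq> M \<and> X \<noteq> {} \<longrightarrow>
        (\<exists>x\<in>M. (\<forall>y\<in>X. P y x) \<and>
           (\<forall>a\<in>M. P a x \<longrightarrow> (\<exists>y\<in>X. \<exists>z\<in>M. P z y \<and> P z a))))"

end

theory Submission
  imports Defs
begin

text \<open>Everything rests on (S5) applied to a singleton \<open>{y}\<close>: if \<open>{y}\<close> is pre-dense in
  the ideal \<open>I(v)\<close> of some \<open>v \<sqsupseteq> y\<close>, then \<open>v\<close> is the sum of \<open>I(v) \<inter> I(y) = I(y)\<close>.
  Taking \<open>v = y\<close>, with pre-density supplied by (S3) and (S4), every element is the sum of
  its own ideal, so by (S2) any such \<open>v\<close> equals \<open>y\<close>. Choosing \<open>v\<close> as the sum of \<open>{x}\<close>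
  gives reflexivity and as the sum of \<open>{x, y}\<close> gives strong supplementation (P4).
  Transitivity is (S3), antisymmetry follows from \<open>x\<close> being the sum of \<open>I(x)\<close>, and (P5)
  is witnessed by the sum provided by (S1), via (S4).\<close>

locale sum_struct =
  fixes M :: "'a set" and S :: "'a \<Rightarrow> 'a set \<Rightarrow> bool"
  assumes sum_in_carrier: "S x X \<Longrightarrow> x \<in> M \<and> X \<subseteq> M"
    and sum_exists: "X \<subseteq> M \<Longrightarrow> X \<noteq> {} \<Longrightarrow> \<exists>x\<in>M. S x X"
    and sum_unique: "S x X \<Longrightarrow> S y X \<Longrightarrow> x = y"
    and sum_union: "S x X \<Longrightarrow> S y Y \<Longrightarrow> x \<in> Y \<Longrightarrow> S y (X \<union> Y)"
    and sum_overlap: "S x X \<Longrightarrow> S x Y \<Longrightarrow> y \<in> Y \<Longrightarrow>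
      \<exists>z\<in>X. \<exists>Z U. S z Z \<and> S y U \<and> Z \<inter> U \<noteq> {}"
    and sum_of_pre_dense: "x \<in> M \<Longrightarrow> X \<subseteq> M \<Longrightarrow> pre_dense M S X (I_el M S x) \<Longrightarrow>
      S x (I_el M S x \<inter> I_set M S X)"

lemma sum_struct_if_sum_structure:
  assumes "sum_structure M S"
  shows "sum_struct M S"
proof -
  have carrier: "S x X \<Longrightarrow> x \<in> M \<and> X \<subseteq> M" for x X
    using assms by (simp add: sum_structure_def sum_rel_def)
  have unique: "\<forall>x\<in>M. \<forall>y\<in>M. \<forall>X\<subseteq>M. S x X \<and> S y X \<longrightarrow> x = y"
    using assms unfolding sum_structure_def by (elim conjE)
  have union: "\<forall>x\<in>M. \<forall>y\<in>M. \<forall>X Y. X \<subseteq> M \<and> Y \<subseteq> M \<longrightarrow>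
      S x X \<and> S y Y \<and> x \<in> Y \<longrightarrow> S y (X \<union> Y)"
    using assms unfolding sum_structure_def by (elim conjE)
  have overlap: "\<forall>x\<in>M. \<forall>y\<in>M. \<forall>X Y. X \<subseteq> M \<and> Y \<subseteq> M \<longrightarrow>
      S x X \<and> S x Y \<and> y \<in> Y \<longrightarrow>
      (\<exists>z\<in>X. \<exists>Z U. Z \<subseteq> M \<and> U \<subseteq> M \<and> S z Z \<and> S y U \<and> Z \<inter> U \<noteq> {})"
    using assms unfolding sum_structure_def by (elim conjE)
  show ?thesis
  proof
    show "X \<subseteq> M \<Longrightarrow> X \<noteq> {} \<Longrightarrow> \<exists>x\<in>M. S x X" for X
      using assms by (simp add: sum_structure_def)
    show "x = y" if "S x X" "S y X" for x y X
      using unique[rule_format, of x y X] that carrier[OF that(1)] carrier[OF that(2)] by simp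
    show "S y (X \<union> Y)" if "S x X" "S y Y" "x \<in> Y" for x y X Y
      using union[rule_format, of x y X Y] that carrier[OF that(1)] carrier[OF that(2)] by simp
    show "\<exists>z\<in>X. \<exists>Z U. S z Z \<and> S y U \<and> Z \<inter> U \<noteq> {}"
      if "S x X" "S x Y" "y \<in> Y" for x y X Y
      using overlap[rule_format, of x y X Y] that carrier[OF that(1)] carrier[OF that(2)] by blast
    show "x \<in> M \<Longrightarrow> X \<subseteq> M \<Longrightarrow> pre_dense M S X (I_el M S x) \<Longrightarrow>
      S x (I_el M S x \<inter> I_set M S X)" for x X
      using assms by (simp add: sum_structure_def)
  qed (fact carrier)
qed

context sum_struct
begin

abbreviation part :: "'a \<Rightarrow> 'a \<Rightarrow> bool" where
  "part \<equiv> sqleS M S"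

lemma part_iff: "part x y \<longleftrightarrow> (\<exists>X. S y X \<and> x \<in> X)"
  unfolding sqleS_def using sum_in_carrier by blast

lemma part_in_carrier: "part x y \<Longrightarrow> x \<in> M \<and> y \<in> M"
  unfolding part_iff using sum_in_carrier by blast

lemma I_el_eq: "I_el M S x = {y. part y x}"
  unfolding I_el_def using part_in_carrier by blast

lemma s_overlaps_iff: "s_overlaps M S a b \<longleftrightarrow> (\<exists>u. part u a \<and> part u b)"
proof
  assume "s_overlaps M S a b"
  then obtain X Y u where "S a X" "S b Y" "u \<in> X" "u \<in> Y"
    unfolding s_overlaps_def by blast
  then show "\<exists>u. part u a \<and> part u b" unfolding part_iff by blast
next
  assume "\<exists>u. part u a \<and> part u b"
  then obtain X Y u where X: "S a X" and Y: "S b Y" and "u \<in> X" "u \<in> Y"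
    unfolding part_iff by blast
  then show "s_overlaps M S a b"
    using sum_in_carrier[OF X] sum_in_carrier[OF Y] unfolding s_overlaps_def by blast
qed

lemma pre_dense_singleton_iff:
  "pre_dense M S {y} B \<longleftrightarrow> (\<forall>b\<in>B. \<exists>u. part u y \<and> part u b)"
  by (simp add: pre_dense_def s_overlaps_iff)

lemma part_trans: "part x y \<Longrightarrow> part y z \<Longrightarrow> part x z"
  unfolding part_iff using sum_union by blast

lemma part_of_sum_overlaps_summand:
  assumes "S x X" "part b x"
  shows "\<exists>z\<in>X. \<exists>u. part u z \<and> part u b"
proof -
  obtain Y where "S x Y" "b \<in> Y"
    using assms(2) unfolding part_iff by blast
  from sum_overlap[OF assms(1) this] obtain z Z U
    where "z \<in> X" "S z Z" "S b U" "Z \<inter> U \<noteq> {}" by blast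
  then show ?thesis unfolding part_iff by blast
qed

lemma sum_of_pre_dense_singleton:
  assumes "part y v" "pre_dense M S {y} (I_el M S v)"
  shows "S v (I_el M S y)"
proof -
  have "S v (I_el M S v \<inter> I_el M S y)"
    using sum_of_pre_dense[of v "{y}"] assms part_in_carrier by (simp add: I_set_def)
  moreover have "I_el M S y \<subseteq> I_el M S v"
    using assms(1) part_trans by (auto simp: I_el_eq)
  ultimately show ?thesis by (simp add: Int_absorb1)
qed

lemma sum_of_ideal:
  assumes "x \<in> M"
  shows "S x (I_el M S x)"
proof -
  have "\<exists>u. part u x \<and> part u b" if "part b x" for b
  proof -
    obtain Y where "S x Y" using \<open>part b x\<close> unfolding part_iff by blast
    then obtain u where "part u b"
      using part_of_sum_overlaps_summand \<open>part b x\<close> by blast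
    then show ?thesis using \<open>part b x\<close> part_trans by blast
  qed
  then have "pre_dense M S {x} (I_el M S x)"
    by (simp add: pre_dense_singleton_iff I_el_eq)
  then show ?thesis
    using sum_of_pre_dense[of x "{x}"] assms by (simp add: I_set_def)
qed

lemma eq_if_pre_dense_singleton:
  "part y v \<Longrightarrow> pre_dense M S {y} (I_el M S v) \<Longrightarrow> v = y"
  using sum_of_pre_dense_singleton sum_of_ideal part_in_carrier sum_unique by blast

lemma part_refl:
  assumes "x \<in> M"
  shows "part x x"
proof -
  obtain w where w: "S w {x}" using sum_exists[of "{x}"] assms by blast
  then have "part x w" unfolding part_iff by blast
  moreover have "pre_dense M S {x} (I_el M S w)"
    using part_of_sum_overlaps_summand[OF w] by (simp add: pre_dense_singleton_iff I_el_eq)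
  ultimately show ?thesis using eq_if_pre_dense_singleton by metis
qed

lemma part_antisym: "part x y \<Longrightarrow> part y x \<Longrightarrow> x = y"
proof -
  assume "part x y" "part y x"
  then have "I_el M S x = I_el M S y" using part_trans by (auto simp: I_el_eq)
  then show "x = y"
    using \<open>part x y\<close> sum_of_ideal part_in_carrier sum_unique by metis
qed

lemma part_supplementation:
  assumes "x \<in> M" "y \<in> M" "\<not> part x y"
  shows "\<exists>z\<in>M. part z x \<and> \<not> (\<exists>u\<in>M. part u z \<and> part u y)"
proof (rule ccontr)
  assume "\<not> ?thesis"
  then have overlap_y: "\<exists>t. part t u \<and> part t y" if "part u x" for u
    using that part_in_carrier by blast
  obtain v where v: "S v {x, y}" using sum_exists[of "{x, y}"] assms by blast
  then have "part x v" "part y v" unfolding part_iff by blast+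
  have "\<exists>t. part t y \<and> part t b" if "part b v" for b
  proof -
    obtain z u where "z \<in> {x, y}" "part u z" "part u b"
      using part_of_sum_overlaps_summand[OF v \<open>part b v\<close>] by blast
    then show ?thesis using overlap_y part_trans by blast
  qed
  then have "pre_dense M S {y} (I_el M S v)"
    by (simp add: pre_dense_singleton_iff I_el_eq)
  with \<open>part y v\<close> have "v = y" by (rule eq_if_pre_dense_singleton)
  with \<open>part x v\<close> \<open>\<not> part x y\<close> show False by simp
qed

lemma part_fusion:
  assumes "X \<subseteq> M" "X \<noteq> {}"
  shows "\<exists>x\<in>M. (\<forall>y\<in>X. part y x) \<and>
    (\<forall>a\<in>M. part a x \<longrightarrow> (\<exists>y\<in>X. \<exists>z\<in>M. part z y \<and> part z a))"
proof -
  obtain x where "x \<in> M" and x: "S x X" using sum_exists assms by blast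
  moreover have "\<forall>y\<in>X. part y x" using x unfolding part_iff by blast
  moreover have "\<forall>a\<in>M. part a x \<longrightarrow> (\<exists>y\<in>X. \<exists>z\<in>M. part z y \<and> part z a)"
    using part_of_sum_overlaps_summand[OF x] part_in_carrier by blast
  ultimately show ?thesis by blast
qed

end

theorem theorem3p13:
  fixes M :: "'a set" and S :: "'a \<Rightarrow> 'a set \<Rightarrow> bool"
  assumes "sum_structure M S"
    and "M \<noteq> {}"
  shows "mereological_structure M (sqleS M S)"
proof -
  interpret sum_struct M S
    using assms(1) by (rule sum_struct_if_sum_structure)
  show ?thesis
    unfolding mereological_structure_def
    using assms(2) part_refl part_antisym part_trans part_supplementation part_fusion
    by (intro conjI ballI allI impI) (blast+)
qed

end
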